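(* The Gromov--Hausdorff distance $d_{\mathrm{GH}}$ and the modified Gromov--Hausdorff distance $\widehat{d}_{\mathrm{GH}}$ are not Lipschitz-equivalent, even when restricted to finite ultrametric spaces: for every $C>0$ there exist finite ultrametric spaces $X,Y$ with $d_{\mathrm{GH}}(X,Y)> C\,\widehat{d}_{\mathrm{GH}}(X,Y)$.
   Context: A metric space $X$ is ultrametric if $d_X(x,x'')\le\max\{d_X(x,x'),d_X(x',x'')\}$ for all $x,x',x''\in X$. For a map $f:X\to Y$ between metric spaces, $\operatorname{dis}(f)=\sup_{x,x'\in X}|d_X(x,x')-d_Y(f(x),f(x'))|$. For $f:X\to Y$, $g:Y\to X$, $\operatorname{codis}(f,g)=\sup_{x\in X,y\in Y}|d_X(x,g(y))-d_Y(f(x),y)|$. For compact metric spaces, $d_{\mathrm{GH}}(X,Y)$ is the Gromov--Hausdorff distance (infimum over metric spaces $Z$ and isometric embeddings of $X,Y$ into $Z$ of the Hausdorff distance of the images); equivalently $d_{\mathrm{GH}}(X,Y)=\frac12\inf_{f,g}\max\{\operatorname{dis}(f),\operatorname{dis}(g),\operatorname{codis}(f,g)\}$. The modified Gromov--Hausdorff distance is $\widehat{d}_{\mathrm{GH}}(X,Y)=\frac12\max\{\inf_{f:X\to Y}\operatorname{dis}(f),\inf_{g:Y\to X}\operatorname{dis}(g)\}$. *)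

theory Defs
  imports "HOL-Library.FuncSet" Complex_Main
begin

definition finite_metric_space :: "'a set \<Rightarrow> ('a \<Rightarrow> 'a \<Rightarrow> real) \<Rightarrow> bool" where
  "finite_metric_space X d \<longleftrightarrow> finite X \<and> X \<noteq> {} \<and>
     (\<forall>x\<in>X. \<forall>y\<in>X. d x y = 0 \<longleftrightarrow> x = y) \<and>
     (\<forall>x\<in>X. \<forall>y\<in>X. d x y = d y x) \<and>
     (\<forall>x\<in>X. \<forall>y\<in>X. \<forall>z\<in>X. d x z \<le> d x y + d y z)"

definition ultrametric :: "'a set \<Rightarrow> ('a \<Rightarrow> 'a \<Rightarrow> real) \<Rightarrow> bool" where
  "ultrametric X d \<longleftrightarrow> (\<forall>x\<in>X. \<forall>x'\<in>X. \<forall>x''\<in>X. d x x'' \<le> max (d x x') (d x' x''))"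

definition finite_ultrametric_space :: "'a set \<Rightarrow> ('a \<Rightarrow> 'a \<Rightarrow> real) \<Rightarrow> bool" where
  "finite_ultrametric_space X d \<longleftrightarrow> finite_metric_space X d \<and> ultrametric X d"

definition dis :: "'a set \<Rightarrow> ('a \<Rightarrow> 'a \<Rightarrow> real) \<Rightarrow> ('b \<Rightarrow> 'b \<Rightarrow> real) \<Rightarrow> ('a \<Rightarrow> 'b) \<Rightarrow> real" where
  "dis X dX dY f = (SUP p\<in>X \<times> X. \<bar>dX (fst p) (snd p) - dY (f (fst p)) (f (snd p))\<bar>)"

definition codis :: "'a set \<Rightarrow> ('a \<Rightarrow> 'a \<Rightarrow> real) \<Rightarrow> 'b set \<Rightarrow> ('b \<Rightarrow> 'b \<Rightarrow> real)
    \<Rightarrow> ('a \<Rightarrow> 'b) \<Rightarrow> ('b \<Rightarrow> 'a) \<Rightarrow> real" where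
  "codis X dX Y dY f g = (SUP p\<in>X \<times> Y. \<bar>dX (fst p) (g (snd p)) - dY (f (fst p)) (snd p)\<bar>)"

definition dGH :: "'a set \<Rightarrow> ('a \<Rightarrow> 'a \<Rightarrow> real) \<Rightarrow> 'b set \<Rightarrow> ('b \<Rightarrow> 'b \<Rightarrow> real) \<Rightarrow> real" where
  "dGH X dX Y dY = 1/2 * Inf {max (max (dis X dX dY f) (dis Y dY dX g)) (codis X dX Y dY f g)
       | f g. f \<in> X \<rightarrow> Y \<and> g \<in> Y \<rightarrow> X}"

definition mdGH :: "'a set \<Rightarrow> ('a \<Rightarrow> 'a \<Rightarrow> real) \<Rightarrow> 'b set \<Rightarrow> ('b \<Rightarrow> 'b \<Rightarrow> real) \<Rightarrow> real" where
  "mdGH X dX Y dY = 1/2 * max (Inf {dis X dX dY f | f. f \<in> X \<rightarrow> Y})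
                              (Inf {dis Y dY dX g | g. g \<in> Y \<rightarrow> X})"

end

theory Submission
  imports Defs
begin

text \<open>
  Both spaces are unions of clusters at mutual distance 4m. X has a one-point cluster and
  three-point clusters of diameters 2, 4, ..., 2m; Y has a two-point cluster of diameter 2m and
  three-point clusters of diameters 1, 3, ..., 2m - 1. The identity X \<rightarrow> Y and the map Y \<rightarrow> X
  moving each cluster one step down (the two-point one to the top, the bottom three-point one onto
  the single point) have distortion 1, so the modified distance is at most 1/2. But if a pair
  f, g has distortions and codistortion below m, then g sends the two-point cluster of Y into a
  three-point cluster of X of diameter > m, and f must squeeze that cluster into the two-point
  cluster of Y, identifying two of its points: a distortion > m. Hence the Gromov--Hausdorff
  distance is at least m/2.
\<close>

definition cluster_dist :: "('a \<Rightarrow> 'b) \<Rightarrow> ('b \<Rightarrow> real) \<Rightarrow> real \<Rightarrow> 'a \<Rightarrow> 'a \<Rightarrow> real" where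
  "cluster_dist c v L a b = (if a = b then 0 else if c a = c b then v (c a) else L)"

lemma cluster_dist_less_imp_same_cluster:
  "cluster_dist c v L a b < L \<Longrightarrow> c a = c b"
  by (auto simp: cluster_dist_def split: if_splits)

lemma finite_ultrametric_space_cluster_dist:
  assumes "finite S" "S \<noteq> {}" "0 < L"
    and pos: "\<And>x y. x \<in> S \<Longrightarrow> y \<in> S \<Longrightarrow> x \<noteq> y \<Longrightarrow> c x = c y \<Longrightarrow> 0 < v (c x)"
    and le: "\<And>x. x \<in> S \<Longrightarrow> v (c x) \<le> L"
  shows "finite_ultrametric_space S (cluster_dist c v L)"
proof -
  let ?d = "cluster_dist c v L"
  have nonneg: "0 \<le> ?d x y" if "x \<in> S" "y \<in> S" for x y
    using pos[OF that] \<open>0 < L\<close> by (auto simp: cluster_dist_def)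
  have ultra: "?d x z \<le> max (?d x y) (?d y z)" if "x \<in> S" "y \<in> S" "z \<in> S" for x y z
  proof -
    consider "x = z" | "x \<noteq> z" "c x = c z" | "c x \<noteq> c z" by blast
    then show ?thesis
    proof cases
      case 1
      with nonneg[OF that(1,2)] show ?thesis by (simp add: cluster_dist_def)
    next
      case 2
      then have "?d x z \<le> ?d x y \<or> ?d x z \<le> ?d y z"
        using le[OF that(1)] by (auto simp: cluster_dist_def)
      then show ?thesis by linarith
    next
      case 3
      then have "?d x z = ?d x y \<or> ?d x z = ?d y z"
        by (auto simp: cluster_dist_def)
      then show ?thesis by linarith
    qed
  qed
  have "finite_metric_space S ?d"
    unfolding finite_metric_space_def
  proof (intro conjI ballI)
    fix x y assume "x \<in> S" "y \<in> S"
    then show "?d x y = 0 \<longleftrightarrow> x = y"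
      using pos[of x y] \<open>0 < L\<close> by (auto simp: cluster_dist_def)
    show "?d x y = ?d y x" by (simp add: cluster_dist_def)
  next
    fix x y z assume xyz: "x \<in> S" "y \<in> S" "z \<in> S"
    then show "?d x z \<le> ?d x y + ?d y z"
      using ultra[OF xyz] nonneg[OF xyz(1,2)] nonneg[OF xyz(2,3)]
      by (simp add: max_def split: if_split_asm)
  qed (use assms in auto)
  with ultra show ?thesis
    unfolding finite_ultrametric_space_def ultrametric_def by blast
qed

lemma abs_diff_le_dis:
  assumes "finite X" "a \<in> X" "b \<in> X"
  shows "\<bar>dX a b - dY (f a) (f b)\<bar> \<le> dis X dX dY f"
  unfolding dis_def using assms
  by (intro cSUP_upper2[where x="(a, b)"] bdd_above_finite) auto

lemma abs_diff_le_codis: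
  assumes "finite X" "finite Y" "a \<in> X" "b \<in> Y"
  shows "\<bar>dX a (g b) - dY (f a) b\<bar> \<le> codis X dX Y dY f g"
  unfolding codis_def using assms
  by (intro cSUP_upper2[where x="(a, b)"] bdd_above_finite) auto

lemma dis_le:
  assumes "X \<noteq> {}" "\<And>a b. a \<in> X \<Longrightarrow> b \<in> X \<Longrightarrow> \<bar>dX a b - dY (f a) (f b)\<bar> \<le> c"
  shows "dis X dX dY f \<le> c"
  unfolding dis_def using assms by (intro cSUP_least) auto

lemma dis_nonneg:
  assumes "finite X" "X \<noteq> {}"
  shows "0 \<le> dis X dX dY f"
  using assms abs_diff_le_dis[OF assms(1)] by (metis abs_ge_zero all_not_in_conv order.trans)

lemma mdGH_le_dis:
  assumes "finite X" "X \<noteq> {}" "finite Y" "Y \<noteq> {}" "f \<in> X \<rightarrow> Y" "g \<in> Y \<rightarrow> X"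
  shows "mdGH X dX Y dY \<le> max (dis X dX dY f) (dis Y dY dX g) / 2"
proof -
  have "Inf {dis X dX dY f | f. f \<in> X \<rightarrow> Y} \<le> dis X dX dY f"
    using assms(5) dis_nonneg[OF assms(1,2)] by (intro cInf_lower bdd_belowI[of _ 0]) auto
  moreover have "Inf {dis Y dY dX g | g. g \<in> Y \<rightarrow> X} \<le> dis Y dY dX g"
    using assms(6) dis_nonneg[OF assms(3,4)] by (intro cInf_lower bdd_belowI[of _ 0]) auto
  ultimately show ?thesis
    unfolding mdGH_def by linarith
qed

lemma dGH_ge:
  assumes "X \<noteq> {}" "Y \<noteq> {}"
    and "\<And>f g. f \<in> X \<rightarrow> Y \<Longrightarrow> g \<in> Y \<rightarrow> X \<Longrightarrow>
           c \<le> max (max (dis X dX dY f) (dis Y dY dX g)) (codis X dX Y dY f g)"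
  shows "c / 2 \<le> dGH X dX Y dY"
proof -
  obtain x y where "x \<in> X" "y \<in> Y" using assms(1,2) by blast
  then have "(\<lambda>_. y) \<in> X \<rightarrow> Y" "(\<lambda>_. x) \<in> Y \<rightarrow> X" by auto
  then have "c \<le> Inf {max (max (dis X dX dY f) (dis Y dY dX g)) (codis X dX Y dY f g)
                     | f g. f \<in> X \<rightarrow> Y \<and> g \<in> Y \<rightarrow> X}"
    using assms(3) by (intro cInf_greatest) blast+
  then show ?thesis unfolding dGH_def by simp
qed

text \<open>A point n lies in cluster n div 3, so cluster i consists of the points among 3i, 3i+1, 3i+2.\<close>

definition Xm :: "nat \<Rightarrow> nat set" where
  "Xm m = insert 0 {3..3*m+2}"

definition Ym :: "nat \<Rightarrow> nat set" where
  "Ym m = {0, 1} \<union> {3..3*m+2}"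

definition dXm :: "nat \<Rightarrow> nat \<Rightarrow> nat \<Rightarrow> real" where
  "dXm m = cluster_dist (\<lambda>n. n div 3) (\<lambda>i. 2 * real i) (4 * real m)"

definition dYm :: "nat \<Rightarrow> nat \<Rightarrow> nat \<Rightarrow> real" where
  "dYm m = cluster_dist (\<lambda>n. n div 3)
     (\<lambda>i. if i = 0 then 2 * real m else 2 * real i - 1) (4 * real m)"

definition shift_down :: "nat \<Rightarrow> nat \<Rightarrow> nat" where
  "shift_down m n = (if n < 3 then 3*m + n else if n < 6 then 0 else n - 3)"

lemma finite_Xm: "finite (Xm m)" and Xm_nonempty: "Xm m \<noteq> {}"
  by (auto simp: Xm_def)

lemma finite_Ym: "finite (Ym m)" and Ym_nonempty: "Ym m \<noteq> {}"
  by (auto simp: Ym_def)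

lemma finite_ultrametric_space_Xm:
  assumes "m \<ge> 1"
  shows "finite_ultrametric_space (Xm m) (dXm m)"
  unfolding dXm_def
proof (rule finite_ultrametric_space_cluster_dist[OF finite_Xm Xm_nonempty])
  show "0 < 4 * real m" using assms by simp
  fix x y assume "x \<in> Xm m" "y \<in> Xm m" "x \<noteq> y" "x div 3 = y div 3"
  then show "0 < 2 * real (x div 3)" by (auto simp: Xm_def)
next
  fix x assume "x \<in> Xm m"
  then have "x div 3 \<le> m" by (auto simp: Xm_def)
  then show "2 * real (x div 3) \<le> 4 * real m" by simp
qed

lemma finite_ultrametric_space_Ym:
  assumes "m \<ge> 1"
  shows "finite_ultrametric_space (Ym m) (dYm m)"
  unfolding dYm_def
proof (rule finite_ultrametric_space_cluster_dist[OF finite_Ym Ym_nonempty])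
  show "0 < 4 * real m" using assms by simp
  fix x y assume "x \<in> Ym m" "y \<in> Ym m" "x \<noteq> y" "x div 3 = y div 3"
  then show "0 < (if x div 3 = 0 then 2 * real m else 2 * real (x div 3) - 1)"
    using assms by (auto simp: Ym_def)
next
  fix x assume "x \<in> Ym m"
  then have "x div 3 \<le> m" by (auto simp: Ym_def)
  then show "(if x div 3 = 0 then 2 * real m else 2 * real (x div 3) - 1) \<le> 4 * real m"
    by simp
qed

lemma id_in_Xm_to_Ym: "id \<in> Xm m \<rightarrow> Ym m"
  by (auto simp: Xm_def Ym_def)

lemma shift_down_in_Ym_to_Xm: "m \<ge> 1 \<Longrightarrow> shift_down m \<in> Ym m \<rightarrow> Xm m"
  by (auto simp: Ym_def Xm_def shift_down_def split: if_splits)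

lemma dis_id_le_1: "dis (Xm m) (dXm m) (dYm m) id \<le> 1"
proof (rule dis_le[OF Xm_nonempty])
  fix a b assume "a \<in> Xm m" "b \<in> Xm m"
  then have "a \<noteq> b \<Longrightarrow> a div 3 = b div 3 \<Longrightarrow> a div 3 \<noteq> 0"
    by (auto simp: Xm_def)
  then show "\<bar>dXm m a b - dYm m (id a) (id b)\<bar> \<le> 1"
    by (auto simp: dXm_def dYm_def cluster_dist_def)
qed

lemma shift_down_div_3:
  "n \<in> Ym m \<Longrightarrow> shift_down m n div 3 = (if n div 3 = 0 then m else n div 3 - 1)"
  by (auto simp: Ym_def shift_down_def)

lemma dis_shift_down_le_1: "dis (Ym m) (dYm m) (dXm m) (shift_down m) \<le> 1"
proof (rule dis_le[OF Ym_nonempty])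
  fix a b assume ab: "a \<in> Ym m" "b \<in> Ym m"
  show "\<bar>dYm m a b - dXm m (shift_down m a) (shift_down m b)\<bar> \<le> 1"
  proof (cases "a div 3 = b div 3")
    case same: True
    show ?thesis
    proof (cases "a = b")
      case False
      have dY: "dYm m a b = (if a div 3 = 0 then 2 * real m else 2 * real (a div 3) - 1)"
        using same False by (simp add: dYm_def cluster_dist_def)
      have "a div 3 \<noteq> 1 \<Longrightarrow> shift_down m a \<noteq> shift_down m b"
        using same False by (auto simp: shift_down_def)
      then consider "a div 3 = 1" | "a div 3 \<noteq> 1" "shift_down m a \<noteq> shift_down m b"
        by blast
      then show ?thesis
      proof cases
        case 1
        with same have "shift_down m a = 0" "shift_down m b = 0"
          by (auto simp: shift_down_def)
        with dY 1 show ?thesis by (simp add: dXm_def cluster_dist_def)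
      next
        case 2
        with same have "dXm m (shift_down m a) (shift_down m b)
            = 2 * real (if a div 3 = 0 then m else a div 3 - 1)"
          by (simp add: dXm_def cluster_dist_def shift_down_div_3[OF ab(1)] shift_down_div_3[OF ab(2)])
        with dY 2 show ?thesis by (auto simp: of_nat_diff)
      qed
    qed (simp add: dXm_def dYm_def cluster_dist_def)
  next
    case False
    have "a div 3 \<le> m" "b div 3 \<le> m" using ab by (auto simp: Ym_def)
    with False have "shift_down m a div 3 \<noteq> shift_down m b div 3"
      unfolding shift_down_div_3[OF ab(1)] shift_down_div_3[OF ab(2)] by auto
    with False show ?thesis
      by (auto simp: dXm_def dYm_def cluster_dist_def)
  qed
qed

lemma mdGH_Xm_Ym_le:
  assumes "m \<ge> 1"
  shows "mdGH (Xm m) (dXm m) (Ym m) (dYm m) \<le> 1/2"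
proof -
  have "mdGH (Xm m) (dXm m) (Ym m) (dYm m)
      \<le> max (dis (Xm m) (dXm m) (dYm m) id) (dis (Ym m) (dYm m) (dXm m) (shift_down m)) / 2"
    using assms
    by (intro mdGH_le_dis finite_Xm Xm_nonempty finite_Ym Ym_nonempty id_in_Xm_to_Ym
        shift_down_in_Ym_to_Xm)
  with dis_id_le_1[of m] dis_shift_down_le_1[of m] show ?thesis
    by linarith
qed

lemma max_distortion_Xm_Ym_ge:
  assumes m: "m \<ge> 1" and f: "f \<in> Xm m \<rightarrow> Ym m" and g: "g \<in> Ym m \<rightarrow> Xm m"
  shows "real m \<le> max (max (dis (Xm m) (dXm m) (dYm m) f) (dis (Ym m) (dYm m) (dXm m) g))
                        (codis (Xm m) (dXm m) (Ym m) (dYm m) f g)"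
proof (rule ccontr)
  assume small: "\<not> ?thesis"
  have dis_f: "\<bar>dXm m a b - dYm m (f a) (f b)\<bar> < real m" if "a \<in> Xm m" "b \<in> Xm m" for a b
    using abs_diff_le_dis[OF finite_Xm that, of "dXm m" "dYm m" f] small by linarith
  have dis_g: "\<bar>dYm m a b - dXm m (g a) (g b)\<bar> < real m" if "a \<in> Ym m" "b \<in> Ym m" for a b
    using abs_diff_le_dis[OF finite_Ym that, of "dYm m" "dXm m" g] small by linarith
  have codis: "\<bar>dXm m a (g b) - dYm m (f a) b\<bar> < real m" if "a \<in> Xm m" "b \<in> Ym m" for a b
    using abs_diff_le_codis[OF finite_Xm finite_Ym that, of "dXm m" g "dYm m" f] small by linarith
  define x where "x = g 0"
  define j where "j = x div 3"
  have Y01: "0 \<in> Ym m" "1 \<in> Ym m" by (auto simp: Ym_def)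
  with g have x: "x \<in> Xm m" by (auto simp: x_def)
  have "dYm m (f x) 0 < real m"
    using codis[OF x Y01(1)] by (simp add: x_def dXm_def cluster_dist_def)
  with f x m have fx: "f x = 0"
    by (auto simp: dYm_def cluster_dist_def split: if_splits)
  have "real m < 2 * real j"
  proof -
    have "\<bar>2 * real m - dXm m x (g 1)\<bar> < real m"
      using dis_g[OF Y01] by (simp add: x_def dYm_def cluster_dist_def)
    moreover have "dXm m x (g 1) \<in> {0, 2 * real j, 4 * real m}"
      by (auto simp: dXm_def cluster_dist_def j_def)
    ultimately show ?thesis by auto
  qed
  then have "1 \<le> j" by (cases j) auto
  moreover have "j \<le> m" using x by (auto simp: j_def Xm_def)
  ultimately have K: "{3*j..3*j+2} \<subseteq> Xm m" by (auto simp: Xm_def)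
  have "f ` {3*j..3*j+2} \<subseteq> {0, 1}"
  proof
    fix y assume "y \<in> f ` {3*j..3*j+2}"
    then obtain b where b: "b \<in> {3*j..3*j+2}" "y = f b" by blast
    then have "dXm m x b \<le> 2 * real m"
      using \<open>j \<le> m\<close> by (auto simp: dXm_def cluster_dist_def j_def)
    then have "dYm m 0 y < 4 * real m"
      using dis_f[of x b] x K b fx by auto
    then have "y div 3 = 0"
      unfolding dYm_def by (auto dest: cluster_dist_less_imp_same_cluster)
    moreover have "y \<in> Ym m" using f K b by auto
    ultimately show "y \<in> {0, 1}" by (auto simp: Ym_def)
  qed
  then have "\<not> inj_on f {3*j..3*j+2}"
    using card_inj_on_le[of f "{3*j..3*j+2}" "{0, 1}"] by auto
  then obtain a b where ab: "a \<in> {3*j..3*j+2}" "b \<in> {3*j..3*j+2}" "a \<noteq> b" "f a = f b"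
    unfolding inj_on_def by blast
  moreover have "a div 3 = j" "b div 3 = j" using ab(1,2) by auto
  ultimately have "dXm m a b = 2 * real j" "dYm m (f a) (f b) = 0"
    by (auto simp: dXm_def dYm_def cluster_dist_def)
  with dis_f[of a b] K ab(1,2) \<open>real m < 2 * real j\<close> show False
    by (auto simp: subset_iff)
qed

lemma dGH_Xm_Ym_ge: "m \<ge> 1 \<Longrightarrow> real m / 2 \<le> dGH (Xm m) (dXm m) (Ym m) (dYm m)"
  by (intro dGH_ge Xm_nonempty Ym_nonempty max_distortion_Xm_Ym_ge)

theorem theorem2:
  fixes C :: real
  assumes "C > 0"
  shows "\<exists>(X :: nat set) dX (Y :: nat set) dY.
           finite_ultrametric_space X dX \<and> finite_ultrametric_space Y dY \<and>
           dGH X dX Y dY > C * mdGH X dX Y dY"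
proof -
  define m where "m = nat \<lceil>C\<rceil> + 1"
  have "m \<ge> 1" and "C < real m" unfolding m_def by linarith+
  have "C * mdGH (Xm m) (dXm m) (Ym m) (dYm m) \<le> C / 2"
    using mdGH_Xm_Ym_le[OF \<open>m \<ge> 1\<close>] assms by (simp add: mult_left_mono)
  also have "\<dots> < real m / 2"
    using \<open>C < real m\<close> by simp
  also have "\<dots> \<le> dGH (Xm m) (dXm m) (Ym m) (dYm m)"
    using dGH_Xm_Ym_ge[OF \<open>m \<ge> 1\<close>] .
  finally show ?thesis
    using finite_ultrametric_space_Xm[OF \<open>m \<ge> 1\<close>] finite_ultrametric_space_Ym[OF \<open>m \<ge> 1\<close>]
    by blast
qed

end
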